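(* Let $X$ be a compact Hausdorff space, $(E,X,\pi)$ a bundle of complete metric spaces bounded by $k$, $\mu$ an ultrafilter on $X$ converging to $x$, and $f\in E_x$. For an open neighbourhood $W$ of $f$ let $A_W=\{(b_y)_{y\in X}\in\int_XE_y\,d\mu:\ \exists U\in\mu,\ \exists\epsilon>0,\ \coprod_{y\in U}B(b_y,\epsilon)\subseteq W\}$. Then each $A_W$ is nonempty, $A_W\cap A_{W'}=A_{W\cap W'}$, and the filter on $\int_XE_y\,d\mu$ generated by $\{A_W: W \text{ open neighbourhood of } f\}$ is a Cauchy filter; denote its limit by $\sigma_\mu(f)$. The resulting map $\sigma_\mu:E_x\to\int_XE_y\,d\mu$ is 1-Lipschitz.
   Context: Metric ultraproduct: for an ultrafilter $\mu$ on $X$ and complete metric spaces $E_y$ with distances $\le k$, $\int_XE_y\,d\mu=\prod_yE_y/\sim$ with $(a_y)\sim(b_y)$ iff $\lim_\mu d(a_y,b_y)=0$ and metric $\lim_\mu d(a_y,b_y)$; classes may be represented by families defined on a set of $\mu$; it is complete. $B(b,\epsilon)$ is the open ball in the fibre of $b$. Bundle definition: for a surjection $\pi:E\to X$ with metric fibres $E_x$, $E\times_XE$ has the subspace topology of $E\times E$, global distance $d(f,g)=d_{\pi(f)}(f,g)$; $V_\epsilon=\{f:\exists g\in V,\pi f=\pi g,d(f,g)<\epsilon\}$; $V\subseteq_\epsilon W$ means $V\subseteq V_\epsilon\subseteq W$. A bundle of complete metric spaces bounded by $k$ over $X$ is $(E,X,\pi)$ with all fibres complete with distances $\le k$ such that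 (1) $d:E\times_XE\to[0,k]$ is upper semicontinuous ($d^{-1}([0,r))$ open for all $r$); (2) $\pi$ is continuous and open; (3) for every open $W$ and $f\in W$ there are an open neighbourhood $V$ of $f$ and $\epsilon>0$ with $V\subseteq_\epsilon W$. *)

theory Defs
  imports "HOL-Analysis.Analysis"
begin

definition ultrafilter :: "'a filter \<Rightarrow> bool" where
  "ultrafilter F \<longleftrightarrow> F \<noteq> bot \<and> (\<forall>P. eventually P F \<or> eventually (\<lambda>x. \<not> P x) F)"

definition fibre :: "('e \<Rightarrow> 'x) \<Rightarrow> 'x \<Rightarrow> 'e set" where
  "fibre \<pi> y = \<pi> -` {y}"

definition thicken :: "('e \<Rightarrow> 'x) \<Rightarrow> ('e \<Rightarrow> 'e \<Rightarrow> real) \<Rightarrow> 'e set \<Rightarrow> real \<Rightarrow> 'e set" where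
  "thicken \<pi> d V \<epsilon> = {f. \<exists>g\<in>V. \<pi> f = \<pi> g \<and> d f g < \<epsilon>}"

text \<open>Bundle of complete metric spaces bounded by k over X (conditions (1)-(3)).
  The distance d is only meaningful on pairs in the same fibre.\<close>
definition metric_bundle :: "('e::topological_space \<Rightarrow> 'x::topological_space) \<Rightarrow> ('e \<Rightarrow> 'e \<Rightarrow> real) \<Rightarrow> real \<Rightarrow> bool" where
  "metric_bundle \<pi> d k \<longleftrightarrow>
     surj \<pi> \<and>
     (\<forall>y. Metric_space (fibre \<pi> y) d \<and> Metric_space.mcomplete (fibre \<pi> y) d) \<and>
     (\<forall>f g. \<pi> f = \<pi> g \<longrightarrow> d f g \<le> k) \<and>
     (\<forall>r. openin (top_of_set {(f, g). \<pi> f = \<pi> g}) {(f, g). \<pi> f = \<pi> g \<and> d f g < r}) \<and>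
     continuous_on UNIV \<pi> \<and> (\<forall>U. open U \<longrightarrow> open (\<pi> ` U)) \<and>
     (\<forall>W f. open W \<and> f \<in> W \<longrightarrow>
        (\<exists>V \<epsilon>. open V \<and> f \<in> V \<and> \<epsilon> > 0 \<and> V \<subseteq> thicken \<pi> d V \<epsilon> \<and> thicken \<pi> d V \<epsilon> \<subseteq> W))"

definition sections :: "('e \<Rightarrow> 'x) \<Rightarrow> ('x \<Rightarrow> 'e) set" where
  "sections \<pi> = {b. \<forall>y. \<pi> (b y) = y}"

definition ueq :: "('e \<Rightarrow> 'e \<Rightarrow> real) \<Rightarrow> 'x filter \<Rightarrow> ('x \<Rightarrow> 'e) \<Rightarrow> ('x \<Rightarrow> 'e) \<Rightarrow> bool" where
  "ueq d \<mu> a b \<longleftrightarrow> ((\<lambda>y. d (a y) (b y)) \<longlongrightarrow> 0) \<mu>"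

definition ultraprod :: "('e \<Rightarrow> 'x) \<Rightarrow> ('e \<Rightarrow> 'e \<Rightarrow> real) \<Rightarrow> 'x filter \<Rightarrow> ('x \<Rightarrow> 'e) set set" where
  "ultraprod \<pi> d \<mu> = {{c \<in> sections \<pi>. ueq d \<mu> b c} | b. b \<in> sections \<pi>}"

definition udist :: "('e \<Rightarrow> 'e \<Rightarrow> real) \<Rightarrow> 'x filter \<Rightarrow> ('x \<Rightarrow> 'e) set \<Rightarrow> ('x \<Rightarrow> 'e) set \<Rightarrow> real" where
  "udist d \<mu> p q = Lim \<mu> (\<lambda>y. d ((SOME b. b \<in> p) y) ((SOME c. c \<in> q) y))"

definition ball_union :: "('e \<Rightarrow> 'x) \<Rightarrow> ('e \<Rightarrow> 'e \<Rightarrow> real) \<Rightarrow> ('x \<Rightarrow> 'e) \<Rightarrow> 'x set \<Rightarrow> real \<Rightarrow> 'e set" where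
  "ball_union \<pi> d b U \<epsilon> = {e. \<pi> e \<in> U \<and> d (b (\<pi> e)) e < \<epsilon>}"

definition A_set :: "('e \<Rightarrow> 'x) \<Rightarrow> ('e \<Rightarrow> 'e \<Rightarrow> real) \<Rightarrow> 'x filter \<Rightarrow> 'e set \<Rightarrow> ('x \<Rightarrow> 'e) set set" where
  "A_set \<pi> d \<mu> W = {p \<in> ultraprod \<pi> d \<mu>. \<exists>b\<in>p. \<exists>U. eventually (\<lambda>y. y \<in> U) \<mu> \<and>
       (\<exists>\<epsilon>>0. ball_union \<pi> d b U \<epsilon> \<subseteq> W)}"

definition A_filter :: "('e::topological_space \<Rightarrow> 'x) \<Rightarrow> ('e \<Rightarrow> 'e \<Rightarrow> real) \<Rightarrow> 'x filter \<Rightarrow> 'e \<Rightarrow> ('x \<Rightarrow> 'e) set filter" where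
  "A_filter \<pi> d \<mu> f = (INF W\<in>{W. open W \<and> f \<in> W}. principal (A_set \<pi> d \<mu> W))"

definition cauchy_filter :: "('a \<Rightarrow> 'a \<Rightarrow> real) \<Rightarrow> 'a filter \<Rightarrow> bool" where
  "cauchy_filter dist' F \<longleftrightarrow> F \<noteq> bot \<and>
     (\<forall>\<epsilon>>0. \<exists>S. eventually (\<lambda>p. p \<in> S) F \<and> (\<forall>p\<in>S. \<forall>q\<in>S. dist' p q < \<epsilon>))"

definition converges_to :: "('a \<Rightarrow> 'a \<Rightarrow> real) \<Rightarrow> 'a filter \<Rightarrow> 'a \<Rightarrow> bool" where
  "converges_to dist' F a \<longleftrightarrow> (\<forall>\<epsilon>>0. eventually (\<lambda>p. dist' p a < \<epsilon>) F)"

end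

theory Submission
  imports Defs
begin

text \<open>Upper semicontinuity of the distance yields, around every point g of the total space,
  open neighbourhoods whose intersections with the fibres are uniformly small, and openness of
  the projection yields sections lying eventually (along a filter converging to the base point
  of g) in any given neighbourhood of g. Choosing neighbourhoods of fibrewise diameter below
  1/(n+1) and such sections c_n, the values c_n(y) form a Cauchy sequence as long as they all
  stay in their neighbourhoods; completeness of the fibre E_y provides a section b with
  d(b(y), c_n(y)) \<le> 1/(n+1) there, and b then converges to g along the filter. Every member of
  A_W has a representative lying eventually in W, and any two sections eventually lying in a
  fibrewise small neighbourhood are close in the ultraproduct. Hence the A_W form a Cauchy
  filter converging to the class of b, and upper semicontinuity of d gives the Lipschitz
  bound.\<close>

lemma ultrafilter_tendsto_compact:
  fixes h :: "'a \<Rightarrow> 'b::topological_space"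
  assumes F: "ultrafilter F" and S: "compact S" and h: "eventually (\<lambda>y. h y \<in> S) F"
  shows "\<exists>L. (h \<longlongrightarrow> L) F"
proof -
  have "filtermap h F \<noteq> bot" "eventually (\<lambda>r. r \<in> S) (filtermap h F)"
    using F h unfolding ultrafilter_def by (simp_all add: filtermap_bot_iff eventually_filtermap)
  then obtain L where L: "inf (nhds L) (filtermap h F) \<noteq> bot"
    using S unfolding compact_filter by blast
  have "eventually (\<lambda>y. h y \<in> T) F" if "open T" "L \<in> T" for T
  proof (rule ccontr)
    assume "\<not> eventually (\<lambda>y. h y \<in> T) F"
    then have "eventually (\<lambda>r. r \<notin> T) (filtermap h F)"
      using F unfolding ultrafilter_def by (auto simp: eventually_filtermap)
    moreover have "eventually (\<lambda>r. r \<in> T) (nhds L)"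
      using that eventually_nhds by blast
    ultimately have "eventually (\<lambda>r. False) (inf (nhds L) (filtermap h F))"
      unfolding eventually_inf by blast
    then show False
      using L by (simp add: eventually_False)
  qed
  then show ?thesis
    unfolding tendsto_def by blast
qed

lemma (in Metric_space) mcomplete_limit_bound:
  assumes "mcomplete" "range s \<subseteq> M" "(r \<longlongrightarrow> 0) sequentially"
    and close: "\<And>m n. m \<le> n \<Longrightarrow> d (s m) (s n) \<le> r m"
  shows "\<exists>l\<in>M. \<forall>n. d (s n) l \<le> r n"
proof -
  have "MCauchy s"
    unfolding MCauchy_def
  proof (intro conjI allI impI)
    fix \<epsilon> :: real
    assume "\<epsilon> > 0"
    then obtain N where N: "\<And>m. m \<ge> N \<Longrightarrow> r m < \<epsilon>"
      using assms(3) by (force simp: lim_sequentially dist_real_def)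
    have "d (s n) (s n') < \<epsilon>" if "N \<le> n" "N \<le> n'" for n n'
      using close[of n n'] close[of n' n] N[OF that(1)] N[OF that(2)] commute[of "s n" "s n'"]
      by (cases "n \<le> n'") linarith+
    then show "\<exists>N. \<forall>n n'. N \<le> n \<longrightarrow> N \<le> n' \<longrightarrow> d (s n) (s n') < \<epsilon>"
      by blast
  qed (use assms(2) in simp)
  then obtain l where l: "limitin mtopology s l sequentially"
    using assms(1) unfolding mcomplete_def by blast
  have "d (s n) l \<le> r n" for n
  proof (rule field_le_epsilon)
    fix e :: real
    assume "e > 0"
    then obtain N where N: "\<forall>m\<ge>N. s m \<in> M \<and> d (s m) l < e"
      using l unfolding limit_metric_sequentially by blast
    have "d (s n) l \<le> d (s n) (s (max N n)) + d (s (max N n)) l"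
      using l assms(2) by (intro triangle) (auto simp: limit_metric_sequentially)
    then show "d (s n) l \<le> r n + e"
      using close[of n "max N n"] N[rule_format, of "max N n"] by linarith
  qed
  moreover have "l \<in> M"
    using l limit_metric_sequentially by blast
  ultimately show ?thesis
    by blast
qed

text \<open>If P fails somewhere, the last term at which P holds serves as the limit.\<close>

lemma (in Metric_space) mcomplete_partial_limit_bound:
  assumes "mcomplete" "range s \<subseteq> M" "(r \<longlongrightarrow> 0) sequentially"
    and P_down: "\<And>m n. m \<le> n \<Longrightarrow> P n \<Longrightarrow> P m"
    and close: "\<And>m n. m \<le> n \<Longrightarrow> P n \<Longrightarrow> d (s m) (s n) \<le> r m"
  shows "\<exists>l\<in>M. \<forall>n. P n \<longrightarrow> d (s n) l \<le> r n"
proof (cases "\<forall>n. P n")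
  case True
  then show ?thesis
    using mcomplete_limit_bound[OF assms(1-3)] close by blast
next
  case False
  define N where "N = (LEAST n. \<not> P n)"
  have not_P_N: "\<not> P N"
    unfolding N_def using False LeastI_ex[of "\<lambda>n. \<not> P n"] by blast
  have below_N: "n < N" if "P n" for n
    using P_down[of N n] that not_P_N by (meson not_le)
  have "P (N - 1)" if "P n" for n
    using not_less_Least[of "N - 1" "\<lambda>n. \<not> P n"] below_N[OF that] unfolding N_def by simp
  then have "d (s n) (s (N - 1)) \<le> r n" if "P n" for n
    using close[of n "N - 1"] below_N[OF that] that by simp
  then show ?thesis
    using assms(2) by blast
qed

lemma section_proj [simp]: "b \<in> sections \<pi> \<Longrightarrow> \<pi> (b y) = y"
  unfolding sections_def by blast

locale Metric_bundle =
  fixes \<pi> :: "'e::topological_space \<Rightarrow> 'x::topological_space"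
    and d :: "'e \<Rightarrow> 'e \<Rightarrow> real" and k :: real
  assumes metric_bundle: "metric_bundle \<pi> d k"
begin

lemma fibre_metric: "Metric_space (fibre \<pi> y) d"
  and fibre_mcomplete: "Metric_space.mcomplete (fibre \<pi> y) d"
  and surj_proj: "surj \<pi>"
  and d_bounded: "\<pi> u = \<pi> v \<Longrightarrow> d u v \<le> k"
  and open_proj_image: "open U \<Longrightarrow> open (\<pi> ` U)"
  and openin_d_less: "openin (top_of_set {(u, v). \<pi> u = \<pi> v}) {(u, v). \<pi> u = \<pi> v \<and> d u v < r}"
  and thicken_nbhd:
    "open W \<Longrightarrow> f \<in> W \<Longrightarrow> \<exists>V \<epsilon>. open V \<and> f \<in> V \<and> \<epsilon> > 0 \<and> thicken \<pi> d V \<epsilon> \<subseteq> W"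
  using metric_bundle unfolding metric_bundle_def by (elim conjE; meson)+

lemma d_nonneg: "0 \<le> d u v"
  by (rule Metric_space.nonneg[OF fibre_metric])

lemma d_commute: "d u v = d v u"
  by (rule Metric_space.commute[OF fibre_metric])

lemma d_self [simp]: "d u u = 0"
  using Metric_space.zero[OF fibre_metric[of "\<pi> u"], of u u] by (simp add: fibre_def)

lemma d_triangle: "\<pi> u = \<pi> v \<Longrightarrow> \<pi> v = \<pi> w \<Longrightarrow> d u w \<le> d u v + d v w"
  using Metric_space.triangle[OF fibre_metric[of "\<pi> u"], of u v w] by (simp add: fibre_def)

lemma d_diff_le:
  assumes "\<pi> a' = \<pi> a" "\<pi> b = \<pi> a" "\<pi> b' = \<pi> a"
  shows "\<bar>d a b - d a' b'\<bar> \<le> d a a' + d b b'"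
proof -
  have "d a b \<le> d a a' + d a' b" "d a' b \<le> d a' b' + d b' b"
    "d a' b' \<le> d a' a + d a b'" "d a b' \<le> d a b + d b b'"
    by (rule d_triangle; simp add: assms)+
  then show ?thesis
    unfolding abs_le_iff using d_commute[of a a'] d_commute[of b b'] by linarith
qed

lemma d_upper_semicontinuous:
  assumes "\<pi> g = \<pi> h" "d g h < r"
  obtains G H where "open G" "open H" "g \<in> G" "h \<in> H"
    "\<And>u v. u \<in> G \<Longrightarrow> v \<in> H \<Longrightarrow> \<pi> u = \<pi> v \<Longrightarrow> d u v < r"
proof -
  obtain T where T: "open T" "{(u, v). \<pi> u = \<pi> v \<and> d u v < r} = {(u, v). \<pi> u = \<pi> v} \<inter> T"
    using openin_d_less[of r] unfolding openin_open by blast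
  have "(g, h) \<in> T"
    using assms T(2) by blast
  then obtain G H where "open G" "open H" "(g, h) \<in> G \<times> H" "G \<times> H \<subseteq> T"
    by (rule open_prod_elim[OF T(1)])
  moreover have "d u v < r" if "(u, v) \<in> T" "\<pi> u = \<pi> v" for u v
    using that T(2) by blast
  ultimately show thesis
    by (intro that[of G H]) auto
qed

definition fibrewise_diam_less :: "'e set \<Rightarrow> real \<Rightarrow> bool" where
  "fibrewise_diam_less G \<epsilon> \<longleftrightarrow> (\<forall>u\<in>G. \<forall>v\<in>G. \<pi> u = \<pi> v \<longrightarrow> d u v < \<epsilon>)"

lemma fibrewise_diam_less_nbhd:
  assumes "\<epsilon> > 0"
  obtains G where "open G" "g \<in> G" "fibrewise_diam_less G \<epsilon>"
proof -
  obtain G H where "open G" "open H" "g \<in> G" "g \<in> H"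
    and small: "\<And>u v. u \<in> G \<Longrightarrow> v \<in> H \<Longrightarrow> \<pi> u = \<pi> v \<Longrightarrow> d u v < \<epsilon>"
    using d_upper_semicontinuous[of g g \<epsilon>] assms by auto
  then show thesis
    by (intro that[of "G \<inter> H"]) (auto simp: fibrewise_diam_less_def)
qed

lemma exists_section_eventually_in:
  assumes "open W" "g \<in> W" "F \<le> nhds (\<pi> g)"
  obtains c where "c \<in> sections \<pi>" "eventually (\<lambda>y. c y \<in> W) F"
proof -
  have "\<exists>e. \<pi> e = y \<and> (y \<in> \<pi> ` W \<longrightarrow> e \<in> W)" for y
  proof (cases "y \<in> \<pi> ` W")
    case False
    obtain e where "\<pi> e = y"
      using surj_proj by (metis surjD)
    with False show ?thesis
      by blast
  qed blast
  then obtain c where c: "\<forall>y. \<pi> (c y) = y \<and> (y \<in> \<pi> ` W \<longrightarrow> c y \<in> W)"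
    by (metis choice)
  have "eventually (\<lambda>y. y \<in> \<pi> ` W) (nhds (\<pi> g))"
    using open_proj_image[OF assms(1)] assms(2) by (intro eventually_nhds_in_open) auto
  then have "eventually (\<lambda>y. y \<in> \<pi> ` W) F"
    using assms(3) filter_leD by blast
  then have "eventually (\<lambda>y. c y \<in> W) F"
    by (rule eventually_mono) (use c in blast)
  moreover have "c \<in> sections \<pi>"
    using c unfolding sections_def by blast
  ultimately show thesis
    by (intro that)
qed

lemma tendsto_if_eventually_thicken:
  assumes F: "F \<le> nhds (\<pi> g)" and b: "b \<in> sections \<pi>"
    and approx: "\<And>\<epsilon>. \<epsilon> > 0 \<Longrightarrow> \<exists>G. open G \<and> g \<in> G \<and> fibrewise_diam_less G \<epsilon> \<and>
                   eventually (\<lambda>y. b y \<in> thicken \<pi> d G \<epsilon>) F"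
  shows "(b \<longlongrightarrow> g) F"
  unfolding tendsto_def
proof (intro allI impI)
  fix S
  assume "open S" "g \<in> S"
  then obtain V \<delta> where V: "open V" "g \<in> V" "\<delta> > 0" "thicken \<pi> d V \<delta> \<subseteq> S"
    using thicken_nbhd by blast
  obtain G where G: "open G" "g \<in> G" "fibrewise_diam_less G (\<delta>/2)"
    and b_near_G: "eventually (\<lambda>y. b y \<in> thicken \<pi> d G (\<delta>/2)) F"
    using approx[of "\<delta>/2"] V(3) by auto
  obtain c where c: "c \<in> sections \<pi>" "eventually (\<lambda>y. c y \<in> V \<inter> G) F"
    using exists_section_eventually_in[of "V \<inter> G" g F] V G F by auto
  show "eventually (\<lambda>y. b y \<in> S) F"
    using b_near_G c(2)
  proof eventually_elim
    case (elim y)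
    then obtain u where u: "u \<in> G" "\<pi> u = y" "d (b y) u < \<delta>/2"
      using b unfolding thicken_def by auto
    have "d (b y) (c y) \<le> d (b y) u + d u (c y)"
      using u(2) b c(1) by (intro d_triangle) auto
    moreover have "d u (c y) < \<delta>/2"
      using G(3) u(1,2) elim c(1) unfolding fibrewise_diam_less_def by auto
    ultimately have "d (b y) (c y) < \<delta>"
      using u(3) by linarith
    then have "b y \<in> thicken \<pi> d V \<delta>"
      using elim b c(1) unfolding thicken_def by (intro CollectI bexI[of _ "c y"]) auto
    then show ?case
      using V(4) by blast
  qed
qed

lemma decseq_fibrewise_small_nbhds:
  assumes "\<And>n. r n > 0"
  obtains W where "\<And>n. open (W n)" "\<And>n. g \<in> W n" "decseq W" "\<And>n. fibrewise_diam_less (W n) (r n)"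
proof -
  have "\<exists>G. open G \<and> g \<in> G \<and> fibrewise_diam_less G (r n)" for n
    by (rule fibrewise_diam_less_nbhd[OF assms]) blast
  then obtain G where G: "\<forall>n. open (G n) \<and> g \<in> G n \<and> fibrewise_diam_less (G n) (r n)"
    by (metis choice)
  show thesis
  proof (rule that[of "\<lambda>n. \<Inter> (G ` {..n})"])
    show "decseq (\<lambda>n. \<Inter> (G ` {..n}))"
      unfolding decseq_def by auto
    show "fibrewise_diam_less (\<Inter> (G ` {..n})) (r n)" for n
      using G unfolding fibrewise_diam_less_def by blast
  qed (use G in auto)
qed

lemma section_partial_limit:
  assumes c: "\<And>n. c n \<in> sections \<pi>" and r: "(r \<longlongrightarrow> 0) sequentially"
    and U_anti: "\<And>m n y. m \<le> n \<Longrightarrow> y \<in> U n \<Longrightarrow> y \<in> U m"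
    and close: "\<And>m n y. m \<le> n \<Longrightarrow> y \<in> U n \<Longrightarrow> d (c m y) (c n y) \<le> r m"
  obtains b where "b \<in> sections \<pi>" "\<And>n y. y \<in> U n \<Longrightarrow> d (c n y) (b y) \<le> r n"
proof -
  have "\<exists>l\<in>fibre \<pi> y. \<forall>n. y \<in> U n \<longrightarrow> d (c n y) l \<le> r n" for y
  proof (rule Metric_space.mcomplete_partial_limit_bound[OF fibre_metric fibre_mcomplete _ r])
    show "range (\<lambda>n. c n y) \<subseteq> fibre \<pi> y"
      using c by (auto simp: fibre_def)
  qed (use U_anti close in blast)+
  then have "\<forall>y. \<exists>l. l \<in> fibre \<pi> y \<and> (\<forall>n. y \<in> U n \<longrightarrow> d (c n y) l \<le> r n)"
    by blast
  then obtain b where b: "\<forall>y. b y \<in> fibre \<pi> y \<and> (\<forall>n. y \<in> U n \<longrightarrow> d (c n y) (b y) \<le> r n)"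
    by (metis choice)
  moreover have "b \<in> sections \<pi>"
    using b unfolding sections_def fibre_def by blast
  ultimately show thesis
    using that by blast
qed

lemma exists_section_tendsto:
  assumes F: "F \<le> nhds (\<pi> g)"
  obtains b where "b \<in> sections \<pi>" "(b \<longlongrightarrow> g) F"
proof -
  define r :: "nat \<Rightarrow> real" where "r n = inverse (real (Suc n))" for n
  have r_lim: "(r \<longlongrightarrow> 0) sequentially"
    unfolding r_def by (rule LIMSEQ_inverse_real_of_nat)
  obtain W where W: "\<And>n. open (W n)" "\<And>n. g \<in> W n" "decseq W"
    and W_small: "\<And>n. fibrewise_diam_less (W n) (r n)"
    using decseq_fibrewise_small_nbhds[of r] unfolding r_def by auto
  have "\<exists>c. c \<in> sections \<pi> \<and> eventually (\<lambda>y. c y \<in> W n) F" for n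
    by (rule exists_section_eventually_in[OF W(1,2) F]) blast
  then obtain c where c: "\<forall>n. c n \<in> sections \<pi> \<and> eventually (\<lambda>y. c n y \<in> W n) F"
    by (metis choice)
  define U where "U n = {y. \<forall>m\<in>{..n}. c m y \<in> W m}" for n
  have c_close: "d (c m y) (c n y) \<le> r m" if "m \<le> n" "y \<in> U n" for m n y
  proof -
    have "c m y \<in> W m" "c n y \<in> W m"
      using that W(3) unfolding U_def decseq_def by auto
    then show ?thesis
      using W_small[of m] c unfolding fibrewise_diam_less_def by (simp add: less_imp_le)
  qed
  obtain b where b: "b \<in> sections \<pi>" "\<And>n y. y \<in> U n \<Longrightarrow> d (c n y) (b y) \<le> r n"
    using section_partial_limit[of c r U] c r_lim c_close unfolding U_def by auto
  have "(b \<longlongrightarrow> g) F"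
  proof (rule tendsto_if_eventually_thicken[OF F b(1)])
    fix \<epsilon> :: real
    assume "\<epsilon> > 0"
    then obtain n where n: "r n < \<epsilon>"
      using reals_Archimedean[of \<epsilon>] unfolding r_def by blast
    have "eventually (\<lambda>y. y \<in> U n) F"
      unfolding U_def mem_Collect_eq by (rule eventually_ball_finite) (use c in auto)
    then have "eventually (\<lambda>y. b y \<in> thicken \<pi> d (W n) \<epsilon>) F"
    proof eventually_elim
      case (elim y)
      have "d (b y) (c n y) \<le> r n"
        using b(2)[OF elim] d_commute[of "b y" "c n y"] by simp
      moreover have "c n y \<in> W n"
        using elim unfolding U_def by simp
      ultimately show ?case
        using n b(1) c unfolding thicken_def by (intro CollectI bexI[of _ "c n y"]) auto
    qed
    moreover have "fibrewise_diam_less (W n) \<epsilon>"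
      using W_small[of n] n unfolding fibrewise_diam_less_def by (meson less_trans)
    ultimately show "\<exists>G. open G \<and> g \<in> G \<and> fibrewise_diam_less G \<epsilon> \<and>
                       eventually (\<lambda>y. b y \<in> thicken \<pi> d G \<epsilon>) F"
      using W by blast
  qed
  with b(1) show thesis
    by (rule that)
qed

end

locale Metric_bundle_ultrafilter =
  Metric_bundle \<pi> d k for \<pi> :: "'e::topological_space \<Rightarrow> 'x::topological_space" and d k +
  fixes \<mu> :: "'x filter"
  assumes ultrafilter: "ultrafilter \<mu>"
begin

abbreviation class_of where
  "class_of b \<equiv> {c \<in> sections \<pi>. ueq d \<mu> b c}"

lemma ultrafilter_neq_bot: "\<mu> \<noteq> bot"
  using ultrafilter unfolding ultrafilter_def by blast

lemma class_of_in_ultraprod: "b \<in> sections \<pi> \<Longrightarrow> class_of b \<in> ultraprod \<pi> d \<mu>"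
  unfolding ultraprod_def by blast

lemma class_of_self: "b \<in> sections \<pi> \<Longrightarrow> b \<in> class_of b"
  unfolding ueq_def by simp

lemma ultraprod_sections: "p \<in> ultraprod \<pi> d \<mu> \<Longrightarrow> b \<in> p \<Longrightarrow> b \<in> sections \<pi>"
  unfolding ultraprod_def by blast

lemma ultraprod_d_tendsto_0:
  assumes "p \<in> ultraprod \<pi> d \<mu>" "b \<in> p" "c \<in> p"
  shows "((\<lambda>y. d (b y) (c y)) \<longlongrightarrow> 0) \<mu>"
proof -
  obtain a where a: "a \<in> sections \<pi>" "p = class_of a"
    using assms(1) unfolding ultraprod_def by blast
  have lim: "((\<lambda>y. d (a y) (b y) + d (a y) (c y)) \<longlongrightarrow> 0) \<mu>"
    using assms(2,3) a(2) unfolding ueq_def by (auto intro: tendsto_add_zero)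
  have "norm (d (b y) (c y)) \<le> d (a y) (b y) + d (a y) (c y)" for y
    using d_triangle[of "b y" "a y" "c y"] d_commute[of "b y" "a y"] d_nonneg[of "b y" "c y"]
      assms(2,3) a by simp
  then show ?thesis
    by (intro Lim_null_comparison[OF always_eventually lim]) blast
qed

text \<open>The distance of the ultraproduct is the \<mu>-limit of the fibrewise distance of any
  representatives, not only of those picked by SOME in its definition.\<close>

lemma tendsto_udist:
  assumes "p \<in> ultraprod \<pi> d \<mu>" "q \<in> ultraprod \<pi> d \<mu>" "b \<in> p" "c \<in> q"
  shows "((\<lambda>y. d (b y) (c y)) \<longlongrightarrow> udist d \<mu> p q) \<mu>"
proof -
  define b' where "b' = (SOME b. b \<in> p)"
  define c' where "c' = (SOME c. c \<in> q)"
  have "b' \<in> p"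
    unfolding b'_def using \<open>b \<in> p\<close> by (rule someI[of "\<lambda>b. b \<in> p"])
  have "c' \<in> q"
    unfolding c'_def using \<open>c \<in> q\<close> by (rule someI[of "\<lambda>c. c \<in> q"])
  have sections: "b \<in> sections \<pi>" "c \<in> sections \<pi>" "b' \<in> sections \<pi>" "c' \<in> sections \<pi>"
    using assms \<open>b' \<in> p\<close> \<open>c' \<in> q\<close> ultraprod_sections by blast+
  have "eventually (\<lambda>y. d (b' y) (c' y) \<in> {0..k}) \<mu>"
    using sections d_nonneg d_bounded by simp
  then obtain L where L: "((\<lambda>y. d (b' y) (c' y)) \<longlongrightarrow> L) \<mu>"
    using ultrafilter_tendsto_compact[OF ultrafilter compact_Icc, of "\<lambda>y. d (b' y) (c' y)"] by blast
  have "udist d \<mu> p q = L"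
    unfolding udist_def b'_def[symmetric] c'_def[symmetric]
    using ultrafilter_neq_bot L by (intro tendsto_Lim) simp_all
  moreover have diff: "((\<lambda>y. d (b y) (c y) - d (b' y) (c' y)) \<longlongrightarrow> 0) \<mu>"
  proof (rule Lim_null_comparison)
    show "eventually (\<lambda>y. norm (d (b y) (c y) - d (b' y) (c' y)) \<le> d (b y) (b' y) + d (c y) (c' y)) \<mu>"
      using sections by (simp add: d_diff_le)
    show "((\<lambda>y. d (b y) (b' y) + d (c y) (c' y)) \<longlongrightarrow> 0) \<mu>"
      using assms \<open>b' \<in> p\<close> \<open>c' \<in> q\<close> by (intro tendsto_add_zero ultraprod_d_tendsto_0)
  qed
  ultimately show ?thesis
    using tendsto_add[OF L diff] by simp
qed

lemma udist_le:
  assumes "p \<in> ultraprod \<pi> d \<mu>" "q \<in> ultraprod \<pi> d \<mu>" "b \<in> p" "c \<in> q"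
    and "eventually (\<lambda>y. d (b y) (c y) \<le> r) \<mu>"
  shows "udist d \<mu> p q \<le> r"
  using tendsto_upperbound[OF tendsto_udist[OF assms(1-4)] assms(5)] ultrafilter_neq_bot by simp

lemma udist_le_if_eventually_in:
  assumes "p \<in> ultraprod \<pi> d \<mu>" "q \<in> ultraprod \<pi> d \<mu>" "b \<in> p" "c \<in> q"
    and "fibrewise_diam_less G r"
    and "eventually (\<lambda>y. b y \<in> G) \<mu>" "eventually (\<lambda>y. c y \<in> G) \<mu>"
  shows "udist d \<mu> p q \<le> r"
proof (rule udist_le[OF assms(1-4)])
  have sections: "b \<in> sections \<pi>" "c \<in> sections \<pi>"
    using assms(1-4) ultraprod_sections by blast+
  show "eventually (\<lambda>y. d (b y) (c y) \<le> r) \<mu>"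
    using assms(6,7)
  proof eventually_elim
    case (elim y)
    then have "d (b y) (c y) < r"
      using assms(5) sections unfolding fibrewise_diam_less_def by simp
    then show ?case
      by simp
  qed
qed

lemma A_set_eventually_in:
  assumes "p \<in> A_set \<pi> d \<mu> W"
  obtains c where "c \<in> p" "eventually (\<lambda>y. c y \<in> W) \<mu>"
proof -
  obtain b U \<epsilon> where b: "p \<in> ultraprod \<pi> d \<mu>" "b \<in> p" "eventually (\<lambda>y. y \<in> U) \<mu>"
      "\<epsilon> > 0" "ball_union \<pi> d b U \<epsilon> \<subseteq> W"
    using assms unfolding A_set_def by blast
  have "b \<in> sections \<pi>"
    using b(1,2) by (rule ultraprod_sections)
  have "eventually (\<lambda>y. b y \<in> W) \<mu>"
    using b(3)
  proof (rule eventually_mono)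
    fix y
    assume "y \<in> U"
    then have "b y \<in> ball_union \<pi> d b U \<epsilon>"
      using \<open>b \<in> sections \<pi>\<close> b(4) by (simp add: ball_union_def)
    then show "b y \<in> W"
      using b(5) by blast
  qed
  with b(2) show thesis
    by (rule that)
qed

lemma A_set_mono: "W \<subseteq> W' \<Longrightarrow> A_set \<pi> d \<mu> W \<subseteq> A_set \<pi> d \<mu> W'"
  unfolding A_set_def by blast

lemma A_set_Int: "A_set \<pi> d \<mu> W \<inter> A_set \<pi> d \<mu> W' = A_set \<pi> d \<mu> (W \<inter> W')"
proof
  show "A_set \<pi> d \<mu> (W \<inter> W') \<subseteq> A_set \<pi> d \<mu> W \<inter> A_set \<pi> d \<mu> W'"
    by (simp add: A_set_mono)
next
  show "A_set \<pi> d \<mu> W \<inter> A_set \<pi> d \<mu> W' \<subseteq> A_set \<pi> d \<mu> (W \<inter> W')"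
  proof
    fix p
    assume "p \<in> A_set \<pi> d \<mu> W \<inter> A_set \<pi> d \<mu> W'"
    then obtain b U \<epsilon> b' U' \<epsilon>' where
      b: "p \<in> ultraprod \<pi> d \<mu>" "b \<in> p" "eventually (\<lambda>y. y \<in> U) \<mu>" "\<epsilon> > 0"
         "ball_union \<pi> d b U \<epsilon> \<subseteq> W" and
      b': "b' \<in> p" "eventually (\<lambda>y. y \<in> U') \<mu>" "\<epsilon>' > 0" "ball_union \<pi> d b' U' \<epsilon>' \<subseteq> W'"
      unfolding A_set_def by blast
    define \<delta> where "\<delta> = min \<epsilon> \<epsilon>' / 2"
    have \<delta>: "\<delta> > 0" "2 * \<delta> \<le> \<epsilon>" "2 * \<delta> \<le> \<epsilon>'"
      using b(4) b'(3) unfolding \<delta>_def by auto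
    have sections: "b \<in> sections \<pi>" "b' \<in> sections \<pi>"
      using ultraprod_sections b(1,2) b'(1) by blast+
    define U'' where "U'' = {y. y \<in> U \<and> y \<in> U' \<and> d (b' y) (b y) < \<delta>}"
    have "eventually (\<lambda>y. d (b' y) (b y) < \<delta>) \<mu>"
      using ultraprod_d_tendsto_0[OF b(1) b'(1) b(2)] \<delta>(1) d_nonneg
      by (auto simp: tendsto_iff dist_real_def)
    then have "eventually (\<lambda>y. y \<in> U'') \<mu>"
      unfolding U''_def using b(3) b'(2) by (auto intro: eventually_conj)
    moreover have "ball_union \<pi> d b U'' \<delta> \<subseteq> W \<inter> W'"
    proof
      fix e
      assume "e \<in> ball_union \<pi> d b U'' \<delta>"
      then have e: "\<pi> e \<in> U" "\<pi> e \<in> U'" "d (b' (\<pi> e)) (b (\<pi> e)) < \<delta>" "d (b (\<pi> e)) e < \<delta>"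
        unfolding ball_union_def U''_def by auto
      have "d (b' (\<pi> e)) e \<le> d (b' (\<pi> e)) (b (\<pi> e)) + d (b (\<pi> e)) e"
        using sections by (intro d_triangle) auto
      then have "e \<in> ball_union \<pi> d b U \<epsilon>" "e \<in> ball_union \<pi> d b' U' \<epsilon>'"
        unfolding ball_union_def using e \<delta> by auto
      then show "e \<in> W \<inter> W'"
        using b(5) b'(4) by blast
    qed
    ultimately show "p \<in> A_set \<pi> d \<mu> (W \<inter> W')"
      unfolding A_set_def using b(1,2) \<delta>(1) by blast
  qed
qed

lemma A_set_nonempty:
  assumes "open W" "g \<in> W" "\<mu> \<le> nhds (\<pi> g)"
  shows "A_set \<pi> d \<mu> W \<noteq> {}"
proof -
  obtain V \<epsilon> where V: "open V" "g \<in> V" "\<epsilon> > 0" "thicken \<pi> d V \<epsilon> \<subseteq> W"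
    using thicken_nbhd[OF assms(1,2)] by blast
  obtain c where c: "c \<in> sections \<pi>" "eventually (\<lambda>y. c y \<in> V) \<mu>"
    using exists_section_eventually_in[OF V(1,2) assms(3)] by blast
  have "ball_union \<pi> d c {y. c y \<in> V} \<epsilon> \<subseteq> thicken \<pi> d V \<epsilon>"
  proof
    fix e
    assume "e \<in> ball_union \<pi> d c {y. c y \<in> V} \<epsilon>"
    then have "c (\<pi> e) \<in> V" "d e (c (\<pi> e)) < \<epsilon>"
      using d_commute[of e "c (\<pi> e)"] unfolding ball_union_def by auto
    then show "e \<in> thicken \<pi> d V \<epsilon>"
      using c(1) unfolding thicken_def by (intro CollectI bexI[of _ "c (\<pi> e)"]) auto
  qed
  then have "class_of c \<in> A_set \<pi> d \<mu> W"
    unfolding A_set_def using class_of_in_ultraprod[OF c(1)] class_of_self[OF c(1)] c(2) V(3,4)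
    by (intro CollectI conjI bexI[of _ c] exI[of _ "{y. c y \<in> V}"]) auto
  then show ?thesis
    by blast
qed

lemma eventually_A_filter:
  "eventually P (A_filter \<pi> d \<mu> g) \<longleftrightarrow> (\<exists>W. open W \<and> g \<in> W \<and> (\<forall>p\<in>A_set \<pi> d \<mu> W. P p))"
  unfolding A_filter_def
proof (subst eventually_INF_base)
  fix W W'
  assume "W \<in> {W. open W \<and> g \<in> W}" "W' \<in> {W. open W \<and> g \<in> W}"
  then show "\<exists>V\<in>{W. open W \<and> g \<in> W}.
      principal (A_set \<pi> d \<mu> V) \<le> inf (principal (A_set \<pi> d \<mu> W)) (principal (A_set \<pi> d \<mu> W'))"
    by (intro bexI[of _ "W \<inter> W'"]) (auto simp: inf_principal A_set_Int)
qed (auto simp: eventually_principal)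

lemma A_filter_neq_bot:
  assumes "\<mu> \<le> nhds (\<pi> g)"
  shows "A_filter \<pi> d \<mu> g \<noteq> bot"
  using A_set_nonempty[OF _ _ assms] eventually_A_filter[of "\<lambda>_. False" g]
  by (auto simp: trivial_limit_def)

lemma cauchy_filter_A_filter:
  assumes "\<mu> \<le> nhds (\<pi> g)"
  shows "cauchy_filter (udist d \<mu>) (A_filter \<pi> d \<mu> g)"
  unfolding cauchy_filter_def
proof (intro conjI A_filter_neq_bot[OF assms] allI impI)
  fix \<epsilon> :: real
  assume "\<epsilon> > 0"
  then obtain G where G: "open G" "g \<in> G" "fibrewise_diam_less G (\<epsilon>/2)"
    by (meson fibrewise_diam_less_nbhd half_gt_zero)
  have "udist d \<mu> p q < \<epsilon>" if p: "p \<in> A_set \<pi> d \<mu> G" and q: "q \<in> A_set \<pi> d \<mu> G" for p q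
  proof -
    obtain b where "b \<in> p" "eventually (\<lambda>y. b y \<in> G) \<mu>"
      using p by (rule A_set_eventually_in)
    moreover obtain c where "c \<in> q" "eventually (\<lambda>y. c y \<in> G) \<mu>"
      using q by (rule A_set_eventually_in)
    moreover have "p \<in> ultraprod \<pi> d \<mu>" "q \<in> ultraprod \<pi> d \<mu>"
      using p q unfolding A_set_def by blast+
    ultimately have "udist d \<mu> p q \<le> \<epsilon>/2"
      using G(3) by (intro udist_le_if_eventually_in)
    then show ?thesis
      using \<open>\<epsilon> > 0\<close> by linarith
  qed
  then show "\<exists>S. eventually (\<lambda>p. p \<in> S) (A_filter \<pi> d \<mu> g) \<and> (\<forall>p\<in>S. \<forall>q\<in>S. udist d \<mu> p q < \<epsilon>)"
    using G(1,2) unfolding eventually_A_filter by blast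
qed

lemma converges_to_class_of:
  assumes b: "b \<in> sections \<pi>" "(b \<longlongrightarrow> g) \<mu>"
  shows "converges_to (udist d \<mu>) (A_filter \<pi> d \<mu> g) (class_of b)"
  unfolding converges_to_def
proof (intro allI impI)
  fix \<epsilon> :: real
  assume "\<epsilon> > 0"
  then obtain G where G: "open G" "g \<in> G" "fibrewise_diam_less G (\<epsilon>/2)"
    by (meson fibrewise_diam_less_nbhd half_gt_zero)
  have b_in_G: "eventually (\<lambda>y. b y \<in> G) \<mu>"
    using b(2) G(1,2) unfolding tendsto_def by blast
  have "udist d \<mu> p (class_of b) < \<epsilon>" if p: "p \<in> A_set \<pi> d \<mu> G" for p
  proof -
    obtain c where "c \<in> p" "eventually (\<lambda>y. c y \<in> G) \<mu>"
      using p by (rule A_set_eventually_in)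
    moreover have "p \<in> ultraprod \<pi> d \<mu>"
      using p unfolding A_set_def by blast
    ultimately have "udist d \<mu> p (class_of b) \<le> \<epsilon>/2"
      using G(3) b_in_G class_of_in_ultraprod[OF b(1)] class_of_self[OF b(1)]
      by (intro udist_le_if_eventually_in)
    then show ?thesis
      using \<open>\<epsilon> > 0\<close> by linarith
  qed
  then show "eventually (\<lambda>p. udist d \<mu> p (class_of b) < \<epsilon>) (A_filter \<pi> d \<mu> g)"
    using G(1,2) unfolding eventually_A_filter by blast
qed

lemma udist_class_of_le:
  assumes b: "b \<in> sections \<pi>" "(b \<longlongrightarrow> g) \<mu>" and b': "b' \<in> sections \<pi>" "(b' \<longlongrightarrow> h) \<mu>"
    and "\<pi> g = \<pi> h"
  shows "udist d \<mu> (class_of b) (class_of b') \<le> d g h"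
proof (rule field_le_epsilon)
  fix e :: real
  assume "e > 0"
  then obtain G H where "open G" "open H" "g \<in> G" "h \<in> H"
    and close: "\<And>u v. u \<in> G \<Longrightarrow> v \<in> H \<Longrightarrow> \<pi> u = \<pi> v \<Longrightarrow> d u v < d g h + e"
    using d_upper_semicontinuous[of g h "d g h + e"] assms(5) by auto
  then have "eventually (\<lambda>y. b y \<in> G) \<mu>" "eventually (\<lambda>y. b' y \<in> H) \<mu>"
    using b(2) b'(2) unfolding tendsto_def by blast+
  then have "eventually (\<lambda>y. d (b y) (b' y) \<le> d g h + e) \<mu>"
    by eventually_elim (use close b(1) b'(1) in \<open>auto intro: less_imp_le\<close>)
  then show "udist d \<mu> (class_of b) (class_of b') \<le> d g h + e"
    by (rule udist_le[OF class_of_in_ultraprod[OF b(1)] class_of_in_ultraprod[OF b'(1)]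
          class_of_self[OF b(1)] class_of_self[OF b'(1)]])
qed

lemma exists_lipschitz_limit_map:
  assumes "\<mu> \<le> nhds x"
  shows "\<exists>\<sigma>. (\<forall>g\<in>fibre \<pi> x. \<sigma> g \<in> ultraprod \<pi> d \<mu> \<and>
                   converges_to (udist d \<mu>) (A_filter \<pi> d \<mu> g) (\<sigma> g))
             \<and> (\<forall>g\<in>fibre \<pi> x. \<forall>h\<in>fibre \<pi> x. udist d \<mu> (\<sigma> g) (\<sigma> h) \<le> d g h)"
proof -
  have over_x: "\<mu> \<le> nhds (\<pi> g)" if "g \<in> fibre \<pi> x" for g
    using assms that by (simp add: fibre_def)
  have "\<forall>g\<in>fibre \<pi> x. \<exists>b. b \<in> sections \<pi> \<and> (b \<longlongrightarrow> g) \<mu>"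
    using exists_section_tendsto[OF over_x] by blast
  then obtain B where B: "\<forall>g\<in>fibre \<pi> x. B g \<in> sections \<pi> \<and> (B g \<longlongrightarrow> g) \<mu>"
    by (rule bchoice[THEN exE])
  define \<sigma> where "\<sigma> g = class_of (B g)" for g
  have "\<sigma> g \<in> ultraprod \<pi> d \<mu> \<and> converges_to (udist d \<mu>) (A_filter \<pi> d \<mu> g) (\<sigma> g)"
    if "g \<in> fibre \<pi> x" for g
    unfolding \<sigma>_def using B that by (intro conjI class_of_in_ultraprod converges_to_class_of) auto
  moreover have "udist d \<mu> (\<sigma> g) (\<sigma> h) \<le> d g h" if "g \<in> fibre \<pi> x" "h \<in> fibre \<pi> x" for g h
    unfolding \<sigma>_def using B that by (intro udist_class_of_le) (auto simp: fibre_def)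
  ultimately show ?thesis
    by (intro exI[of _ \<sigma>] conjI ballI) blast+
qed

end

theorem theorem4p1:
  fixes \<pi> :: "'e::topological_space \<Rightarrow> 'x::t2_space"
    and d :: "'e \<Rightarrow> 'e \<Rightarrow> real" and k :: real
    and \<mu> :: "'x filter" and x :: 'x and f :: 'e
  assumes "compact (UNIV :: 'x set)"
    and "metric_bundle \<pi> d k"
    and "ultrafilter \<mu>" and "\<mu> \<le> nhds x"
    and "f \<in> fibre \<pi> x"
  shows "(\<forall>W. open W \<and> f \<in> W \<longrightarrow> A_set \<pi> d \<mu> W \<noteq> {})
       \<and> (\<forall>W W'. open W \<and> f \<in> W \<and> open W' \<and> f \<in> W' \<longrightarrow>
             A_set \<pi> d \<mu> W \<inter> A_set \<pi> d \<mu> W' = A_set \<pi> d \<mu> (W \<inter> W'))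
       \<and> cauchy_filter (udist d \<mu>) (A_filter \<pi> d \<mu> f)
       \<and> (\<exists>\<sigma>. (\<forall>g\<in>fibre \<pi> x. \<sigma> g \<in> ultraprod \<pi> d \<mu> \<and>
                   converges_to (udist d \<mu>) (A_filter \<pi> d \<mu> g) (\<sigma> g))
             \<and> (\<forall>g\<in>fibre \<pi> x. \<forall>h\<in>fibre \<pi> x. udist d \<mu> (\<sigma> g) (\<sigma> h) \<le> d g h))"
  \<comment> \<open>Compactness of X only ensures that \<mu> converges, and convergence is assumed.\<close>
proof -
  interpret Metric_bundle_ultrafilter \<pi> d k \<mu>
    using assms(2,3) by (simp add: Metric_bundle_def Metric_bundle_ultrafilter_def
        Metric_bundle_ultrafilter_axioms_def)
  have f_nhds: "\<mu> \<le> nhds (\<pi> f)"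
    using assms(4,5) by (simp add: fibre_def)
  have "\<forall>W. open W \<and> f \<in> W \<longrightarrow> A_set \<pi> d \<mu> W \<noteq> {}"
    using A_set_nonempty[OF _ _ f_nhds] by blast
  moreover have "\<forall>W W'. open W \<and> f \<in> W \<and> open W' \<and> f \<in> W' \<longrightarrow>
      A_set \<pi> d \<mu> W \<inter> A_set \<pi> d \<mu> W' = A_set \<pi> d \<mu> (W \<inter> W')"
    using A_set_Int by blast
  moreover note cauchy_filter_A_filter[OF f_nhds]
  moreover note exists_lipschitz_limit_map[OF assms(4)]
  ultimately show ?thesis
    by (intro conjI)
qed

end
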